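(* Let $(M,d)$ be a bounded hyperconvex metric space and let $T: M\to M$ be a mapping which diminishes the radius of invariant admissible subsets of $M$. Then $T$ has a fixed point, and the fixed point set $F(T)=\{x\in M: Tx=x\}$ (with the induced metric) is hyperconvex.
   Context: A metric space $(M,d)$ is hyperconvex if for every family of closed balls $\{B(x_i,r_i)\}_{i\in I}$ in $M$ with $d(x_i,x_j)\le r_i+r_j$ for all $i,j\in I$, one has $\bigcap_{i\in I}B(x_i,r_i)\neq\emptyset$. For $x\in M$ and $K\subseteq M$, $r_x(K)=\sup\{d(x,y):y\in K\}$. A bounded subset $K\subseteq M$ is admissible if it equals the intersection of all closed balls of $M$ containing it. $T$ diminishes the radius of invariant admissible subsets if for every admissible $A\subseteq M$ with $T(A)\subseteq A$, $r_{Tx}(T(A))\le r_x(A)$ for every $x\in M$. *)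

theory Defs
  imports "HOL-Analysis.Analysis"
begin

text \<open>A metric space is modelled as a subset M of a type of class metric_space,
  carrying the induced metric dist. Closed balls of M are cball x r \<inter> M with x \<in> M.\<close>

definition mball :: "'a::metric_space set \<Rightarrow> 'a \<Rightarrow> real \<Rightarrow> 'a set" where
  "mball M x r = {y \<in> M. dist x y \<le> r}"

definition hyperconvex :: "'a::metric_space set \<Rightarrow> bool" where
  "hyperconvex M \<longleftrightarrow>
     (\<forall>(I::('a \<times> real) set).
        I \<subseteq> M \<times> UNIV \<longrightarrow>
        (\<forall>(x,r)\<in>I. \<forall>(y,s)\<in>I. dist x y \<le> r + s) \<longrightarrow>
        M \<inter> (\<Inter>(x,r)\<in>I. mball M x r) \<noteq> {})"

definition radius_at :: "'a::metric_space \<Rightarrow> 'a set \<Rightarrow> real" where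
  "radius_at x K = (SUP y\<in>K. dist x y)"

definition admissible :: "'a::metric_space set \<Rightarrow> 'a set \<Rightarrow> bool" where
  "admissible M K \<longleftrightarrow> K \<subseteq> M \<and> bounded K \<and>
     K = M \<inter> \<Inter>{mball M x r | x r. x \<in> M \<and> K \<subseteq> mball M x r}"

definition diminishes_radius :: "'a::metric_space set \<Rightarrow> ('a \<Rightarrow> 'a) \<Rightarrow> bool" where
  "diminishes_radius M T \<longleftrightarrow>
     (\<forall>A. admissible M A \<and> T ` A \<subseteq> A \<longrightarrow>
        (\<forall>x\<in>M. radius_at (T x) (T ` A) \<le> radius_at x A))"

end

theory Submission
  imports Defs
begin

text \<open>
  Admissible subsets of a hyperconvex space behave like compact sets: pairwise intersecting
  admissible sets have a common point. Hence, by Zorn's lemma, every nonempty T-invariant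
  admissible set contains a minimal one, A. Minimality makes A the intersection of the balls
  containing T(A), so r_Tx(A) = r_Tx(T(A)) \<le> r_x(A). Consequently the points of A within
  diam(A)/2 of all of A form a T-invariant admissible subset, nonempty by hyperconvexity; it
  must be A itself, so diam(A) = 0 and A is a fixed point.

  Applied to A = {x} with x fixed, the hypothesis says that T does not move points away from
  fixed points. So an intersection of pairwise intersecting balls centred at fixed points is a
  nonempty T-invariant admissible set and therefore contains a fixed point.
\<close>

lemma subset_Zorn_nonempty_Inter:
  assumes "\<A> \<noteq> {}" and ch: "\<And>\<C>. \<lbrakk>\<C> \<noteq> {}; subset.chain \<A> \<C>\<rbrakk> \<Longrightarrow> \<Inter>\<C> \<in> \<A>"
  shows "\<exists>M\<in>\<A>. \<forall>X\<in>\<A>. X \<subseteq> M \<longrightarrow> X = M"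
proof -
  have "\<exists>N\<in>uminus ` \<A>. \<forall>X\<in>uminus ` \<A>. N \<subseteq> X \<longrightarrow> X = N"
  proof (rule subset_Zorn_nonempty)
    fix \<C> assume "\<C> \<noteq> {}" "subset.chain (uminus ` \<A>) \<C>"
    then have "uminus ` \<C> \<noteq> {}" "subset.chain \<A> (uminus ` \<C>)"
      by (auto simp: subset_chain_def)
    then have "\<Inter>(uminus ` \<C>) \<in> \<A>" by (rule ch)
    moreover have "\<Union>\<C> = - \<Inter>(uminus ` \<C>)" by auto
    ultimately show "\<Union>\<C> \<in> uminus ` \<A>" by blast
  qed (use assms(1) in blast)
  then show ?thesis
    by (metis (no_types, lifting) Compl_subset_Compl_iff double_complement image_iff)
qed

definition admissible_hull :: "'a::metric_space set \<Rightarrow> 'a set \<Rightarrow> 'a set" where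
  "admissible_hull M K = M \<inter> \<Inter>{mball M x r | x r. x \<in> M \<and> K \<subseteq> mball M x r}"

lemma admissible_iff_hull:
  "admissible M K \<longleftrightarrow> K \<subseteq> M \<and> bounded K \<and> admissible_hull M K = K"
  unfolding admissible_def admissible_hull_def by auto

lemma subset_admissible_hull: "K \<subseteq> M \<Longrightarrow> K \<subseteq> admissible_hull M K"
  unfolding admissible_hull_def by blast

lemma admissible_hull_mono: "K \<subseteq> L \<Longrightarrow> admissible_hull M K \<subseteq> admissible_hull M L"
  unfolding admissible_hull_def by blast

lemma admissible_hull_least: "admissible M A \<Longrightarrow> K \<subseteq> A \<Longrightarrow> admissible_hull M K \<subseteq> A"
  by (metis admissible_hull_mono admissible_iff_hull)

lemma admissible_Inter:
  assumes "\<C> \<noteq> {}" and adm: "\<And>A. A \<in> \<C> \<Longrightarrow> admissible M A"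
  shows "admissible M (\<Inter>\<C>)"
proof -
  obtain A where "A \<in> \<C>" using assms(1) by blast
  then have "\<Inter>\<C> \<subseteq> M" "bounded (\<Inter>\<C>)"
    using adm[of A] by (auto simp: admissible_def intro: bounded_subset)
  moreover have "admissible_hull M (\<Inter>\<C>) \<subseteq> \<Inter>\<C>"
    using adm by (metis Inter_greatest Inter_lower admissible_hull_least)
  ultimately show ?thesis
    using subset_admissible_hull[of "\<Inter>\<C>" M] by (simp add: admissible_iff_hull subset_antisym)
qed

lemma admissible_mball: "x \<in> M \<Longrightarrow> admissible M (mball M x r)"
  unfolding admissible_iff_hull
  by (auto simp: admissible_hull_def mball_def intro: bounded_subset[OF bounded_cball])

lemma admissible_self: "bounded M \<Longrightarrow> admissible M M"
  unfolding admissible_iff_hull admissible_hull_def by auto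

lemma admissible_admissible_hull:
  assumes "bounded M"
  shows "admissible M (admissible_hull M K)"
proof -
  have hull: "admissible_hull M K = \<Inter>(insert M {mball M x r | x r. x \<in> M \<and> K \<subseteq> mball M x r})"
    unfolding admissible_hull_def by blast
  show ?thesis
    unfolding hull by (rule admissible_Inter) (auto intro: admissible_self[OF assms] admissible_mball)
qed

lemma hyperconvexE:
  assumes "hyperconvex M" "I \<subseteq> M \<times> UNIV"
    and "\<And>x r y s. (x, r) \<in> I \<Longrightarrow> (y, s) \<in> I \<Longrightarrow> dist x y \<le> r + s"
  obtains p where "p \<in> M" "\<And>x r. (x, r) \<in> I \<Longrightarrow> dist x p \<le> r"
proof -
  have "\<forall>(x, r)\<in>I. \<forall>(y, s)\<in>I. dist x y \<le> r + s"
    using assms(3) by blast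
  then have "M \<inter> (\<Inter>(x, r)\<in>I. mball M x r) \<noteq> {}"
    using assms(1,2) unfolding hyperconvex_def by blast
  then obtain p where "p \<in> M" "\<And>x r. (x, r) \<in> I \<Longrightarrow> p \<in> mball M x r"
    by blast
  then show thesis
    using that by (simp add: mball_def)
qed

lemma hyperconvex_nonempty: "hyperconvex M \<Longrightarrow> M \<noteq> {}"
  by (erule hyperconvexE[of _ "{}"]) auto

lemma hyperconvex_mball_Int_nonempty:
  assumes "hyperconvex M" "x \<in> M" "y \<in> M" "0 \<le> r" "0 \<le> s" "dist x y \<le> r + s"
  shows "mball M x r \<inter> mball M y s \<noteq> {}"
proof -
  obtain p where "p \<in> M" "\<And>z t. (z, t) \<in> {(x, r), (y, s)} \<Longrightarrow> dist z p \<le> t"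
    by (rule hyperconvexE[OF assms(1), of "{(x, r), (y, s)}"])
      (use assms in \<open>auto simp: dist_commute\<close>)
  then show ?thesis by (auto simp: mball_def)
qed

lemma hyperconvex_Inter_admissible_nonempty:
  assumes "hyperconvex M" and adm: "\<And>A. A \<in> \<C> \<Longrightarrow> admissible M A"
    and meet: "\<And>A B. A \<in> \<C> \<Longrightarrow> B \<in> \<C> \<Longrightarrow> A \<inter> B \<noteq> {}"
  shows "\<Inter>\<C> \<noteq> {}"
proof -
  define I where "I = {(x, r). x \<in> M \<and> (\<exists>A\<in>\<C>. A \<subseteq> mball M x r)}"
  have I_sub: "I \<subseteq> M \<times> UNIV" unfolding I_def by blast
  have I_pair: "dist x y \<le> r + s" if xr: "(x, r) \<in> I" and ys: "(y, s) \<in> I" for x r y s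
  proof -
    obtain A B where "A \<in> \<C>" "A \<subseteq> mball M x r" "B \<in> \<C>" "B \<subseteq> mball M y s"
      using xr ys unfolding I_def by blast
    moreover obtain a where "a \<in> A" "a \<in> B"
      using meet[OF \<open>A \<in> \<C>\<close> \<open>B \<in> \<C>\<close>] by blast
    ultimately have "dist x a \<le> r" "dist y a \<le> s"
      by (auto simp: mball_def)
    then show "dist x y \<le> r + s"
      using dist_triangle2[of x y a] by linarith
  qed
  obtain p where "p \<in> M" and p: "\<And>x r. (x, r) \<in> I \<Longrightarrow> dist x p \<le> r"
    using hyperconvexE[OF assms(1) I_sub] I_pair by blast
  have "p \<in> A" if "A \<in> \<C>" for A
  proof -
    have "p \<in> mball M x r" if "x \<in> M" "A \<subseteq> mball M x r" for x r
      using \<open>p \<in> M\<close> p[of x r] that \<open>A \<in> \<C>\<close> unfolding I_def mball_def by blast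
    then have "p \<in> admissible_hull M A"
      using \<open>p \<in> M\<close> unfolding admissible_hull_def by blast
    then show ?thesis using adm[OF that] by (simp add: admissible_iff_hull)
  qed
  then show ?thesis by blast
qed

lemma dist_le_radius_at:
  assumes "bounded K" "y \<in> K"
  shows "dist x y \<le> radius_at x K"
proof -
  obtain e where "\<forall>z\<in>K. dist x z \<le> e"
    using assms(1) bounded_any_center by metis
  then have "bdd_above (dist x ` K)"
    by (metis bdd_above.I2)
  then show ?thesis
    unfolding radius_at_def by (rule cSUP_upper[OF assms(2)])
qed

lemma radius_at_le: "K \<noteq> {} \<Longrightarrow> (\<And>y. y \<in> K \<Longrightarrow> dist x y \<le> r) \<Longrightarrow> radius_at x K \<le> r"
  unfolding radius_at_def by (rule cSUP_least)

definition invariant_admissible :: "'a::metric_space set \<Rightarrow> ('a \<Rightarrow> 'a) \<Rightarrow> 'a set \<Rightarrow> bool" where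
  "invariant_admissible M T A \<longleftrightarrow> admissible M A \<and> A \<noteq> {} \<and> T ` A \<subseteq> A"

definition minimal_invariant_admissible ::
    "'a::metric_space set \<Rightarrow> ('a \<Rightarrow> 'a) \<Rightarrow> 'a set \<Rightarrow> bool" where
  "minimal_invariant_admissible M T A \<longleftrightarrow>
     invariant_admissible M T A \<and> (\<forall>X. invariant_admissible M T X \<and> X \<subseteq> A \<longrightarrow> X = A)"

lemma minimal_invariant_admissible_exists:
  assumes "hyperconvex M" "invariant_admissible M T B"
  obtains A where "A \<subseteq> B" "minimal_invariant_admissible M T A"
proof -
  let ?\<A> = "{A. invariant_admissible M T A \<and> A \<subseteq> B}"
  have "\<exists>A\<in>?\<A>. \<forall>X\<in>?\<A>. X \<subseteq> A \<longrightarrow> X = A"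
  proof (rule subset_Zorn_nonempty_Inter)
    fix \<C> assume "\<C> \<noteq> {}" and chain: "subset.chain ?\<A> \<C>"
    then have adm: "\<And>A. A \<in> \<C> \<Longrightarrow> admissible M A"
      and nonempty: "\<And>A. A \<in> \<C> \<Longrightarrow> A \<noteq> {}"
      and inv: "\<And>A. A \<in> \<C> \<Longrightarrow> T ` A \<subseteq> A"
      and sub: "\<And>A. A \<in> \<C> \<Longrightarrow> A \<subseteq> B"
      unfolding subset_chain_def invariant_admissible_def by auto
    have "A \<inter> A' \<noteq> {}" if "A \<in> \<C>" "A' \<in> \<C>" for A A'
    proof -
      have "A \<subseteq> A' \<or> A' \<subseteq> A"
        using chain that unfolding subset_chain_def by blast
      then show ?thesis
        using nonempty that by (metis Int_absorb1 Int_absorb2)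
    qed
    then have "\<Inter>\<C> \<noteq> {}"
      using hyperconvex_Inter_admissible_nonempty[OF assms(1) adm] by blast
    moreover have "admissible M (\<Inter>\<C>)"
      using \<open>\<C> \<noteq> {}\<close> adm by (rule admissible_Inter)
    moreover have "T ` \<Inter>\<C> \<subseteq> \<Inter>\<C>"
      using inv by blast
    moreover have "\<Inter>\<C> \<subseteq> B"
      using \<open>\<C> \<noteq> {}\<close> sub by blast
    ultimately show "\<Inter>\<C> \<in> ?\<A>"
      by (simp add: invariant_admissible_def)
  next
    show "?\<A> \<noteq> {}"
      using assms(2) by blast
  qed
  then obtain A where A: "invariant_admissible M T A" "A \<subseteq> B"
    and min: "\<forall>X\<in>?\<A>. X \<subseteq> A \<longrightarrow> X = A"
    by blast
  have "X = A" if "invariant_admissible M T X" "X \<subseteq> A" for X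
    using min that \<open>A \<subseteq> B\<close> by auto
  then have "minimal_invariant_admissible M T A"
    using A(1) unfolding minimal_invariant_admissible_def by blast
  with \<open>A \<subseteq> B\<close> show thesis
    by (rule that)
qed

lemma minimal_invariant_admissible_hull_image:
  assumes "bounded M" and A: "minimal_invariant_admissible M T A"
  shows "admissible_hull M (T ` A) = A"
proof -
  have "admissible M A" "A \<noteq> {}" "T ` A \<subseteq> A"
    using A by (auto simp: minimal_invariant_admissible_def invariant_admissible_def)
  then have "T ` A \<subseteq> M"
    by (auto simp: admissible_def)
  let ?H = "admissible_hull M (T ` A)"
  have "T ` A \<subseteq> ?H"
    using \<open>T ` A \<subseteq> M\<close> by (rule subset_admissible_hull)
  moreover have "?H \<subseteq> A"
    using \<open>admissible M A\<close> \<open>T ` A \<subseteq> A\<close> by (rule admissible_hull_least)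
  ultimately have "T ` ?H \<subseteq> ?H" "?H \<noteq> {}"
    using \<open>A \<noteq> {}\<close> by (blast intro: image_mono order_trans)+
  then have "invariant_admissible M T ?H"
    using admissible_admissible_hull[OF assms(1)] by (simp add: invariant_admissible_def)
  then show ?thesis
    using A \<open>?H \<subseteq> A\<close> by (simp add: minimal_invariant_admissible_def)
qed

lemma minimal_invariant_admissible_radius_image:
  assumes "bounded M" "diminishes_radius M T" and A: "minimal_invariant_admissible M T A"
    and "x \<in> A"
  shows "radius_at (T x) A \<le> radius_at x A"
proof -
  have "admissible M A" "A \<noteq> {}" "T ` A \<subseteq> A"
    using A by (auto simp: minimal_invariant_admissible_def invariant_admissible_def)
  then have "A \<subseteq> M" "bounded A"
    by (simp_all add: admissible_def)
  then have "bounded (T ` A)" "T x \<in> M"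
    using \<open>T ` A \<subseteq> A\<close> \<open>x \<in> A\<close> by (auto intro: bounded_subset)
  have "T ` A \<subseteq> mball M (T x) (radius_at (T x) (T ` A))"
    using \<open>A \<subseteq> M\<close> \<open>T ` A \<subseteq> A\<close> dist_le_radius_at[OF \<open>bounded (T ` A)\<close>]
    by (auto simp: mball_def)
  then have "admissible_hull M (T ` A) \<subseteq> mball M (T x) (radius_at (T x) (T ` A))"
    by (rule admissible_hull_least[OF admissible_mball[OF \<open>T x \<in> M\<close>]])
  then have "A \<subseteq> mball M (T x) (radius_at (T x) (T ` A))"
    unfolding minimal_invariant_admissible_hull_image[OF assms(1) A] .
  then have "radius_at (T x) A \<le> radius_at (T x) (T ` A)"
    by (intro radius_at_le[OF \<open>A \<noteq> {}\<close>]) (auto simp: mball_def)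
  also have "\<dots> \<le> radius_at x A"
    using assms(2) \<open>admissible M A\<close> \<open>T ` A \<subseteq> A\<close> \<open>x \<in> A\<close> \<open>A \<subseteq> M\<close>
    unfolding diminishes_radius_def by (meson subsetD)
  finally show ?thesis .
qed

lemma hyperconvex_admissible_centre:
  assumes "hyperconvex M" "admissible M A" "A \<noteq> {}"
  shows "A \<inter> (\<Inter>y\<in>A. mball M y (diameter A / 2)) \<noteq> {}"
proof -
  let ?r = "diameter A / 2"
  let ?\<C> = "insert A ((\<lambda>y. mball M y ?r) ` A)"
  have "A \<subseteq> M" "bounded A"
    using assms(2) by (simp_all add: admissible_def)
  then have "0 \<le> ?r"
    using diameter_ge_0 by simp
  have centre: "y \<in> A \<inter> mball M y ?r" if "y \<in> A" for y
    using that \<open>A \<subseteq> M\<close> \<open>0 \<le> ?r\<close> by (auto simp: mball_def)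
  have meet: "mball M y ?r \<inter> mball M z ?r \<noteq> {}" if "y \<in> A" "z \<in> A" for y z
  proof -
    have "dist y z \<le> ?r + ?r"
      using diameter_bounded_bound[OF \<open>bounded A\<close> that] by simp
    then show ?thesis
      using hyperconvex_mball_Int_nonempty[OF assms(1)] that \<open>A \<subseteq> M\<close> \<open>0 \<le> ?r\<close> by blast
  qed
  have "\<Inter>?\<C> \<noteq> {}"
  proof (rule hyperconvex_Inter_admissible_nonempty[OF assms(1)])
    show "admissible M D" if "D \<in> ?\<C>" for D
      using that assms(2) \<open>A \<subseteq> M\<close> by (auto intro: admissible_mball)
    show "D \<inter> D' \<noteq> {}" if "D \<in> ?\<C>" "D' \<in> ?\<C>" for D D'
      using that assms(3) centre meet by blast
  qed
  then show ?thesis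
    by simp
qed

lemma minimal_invariant_admissible_half_diameter:
  assumes "bounded M" "hyperconvex M" "diminishes_radius M T"
    and A: "minimal_invariant_admissible M T A"
    and "x \<in> A" "y \<in> A"
  shows "dist x y \<le> diameter A / 2"
proof -
  have "admissible M A" "A \<noteq> {}" "T ` A \<subseteq> A"
    using A by (auto simp: minimal_invariant_admissible_def invariant_admissible_def)
  then have "A \<subseteq> M" "bounded A"
    by (simp_all add: admissible_def)
  let ?r = "diameter A / 2"
  define C where "C = A \<inter> (\<Inter>y\<in>A. mball M y ?r)"
  have "C = \<Inter>(insert A ((\<lambda>y. mball M y ?r) ` A))"
    unfolding C_def by simp
  also have "admissible M \<dots>"
    by (rule admissible_Inter) (use \<open>admissible M A\<close> \<open>A \<subseteq> M\<close> in \<open>auto intro: admissible_mball\<close>)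
  finally have "admissible M C" .
  moreover have "C \<noteq> {}"
    unfolding C_def using hyperconvex_admissible_centre[OF assms(2)] \<open>admissible M A\<close> \<open>A \<noteq> {}\<close> .
  moreover have "T ` C \<subseteq> C"
  proof (rule image_subsetI)
    fix x assume "x \<in> C"
    then have "x \<in> A" and "\<And>y. y \<in> A \<Longrightarrow> dist x y \<le> ?r"
      unfolding C_def mball_def by (auto simp: dist_commute)
    then have "radius_at x A \<le> ?r"
      by (intro radius_at_le[OF \<open>A \<noteq> {}\<close>])
    then have "radius_at (T x) A \<le> ?r"
      using minimal_invariant_admissible_radius_image[OF assms(1,3) A \<open>x \<in> A\<close>] by linarith
    then have "dist y (T x) \<le> ?r" if "y \<in> A" for y
      using dist_le_radius_at[OF \<open>bounded A\<close> that, of "T x"] by (simp add: dist_commute)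
    moreover have "T x \<in> A"
      using \<open>T ` A \<subseteq> A\<close> \<open>x \<in> A\<close> by blast
    ultimately show "T x \<in> C"
      unfolding C_def mball_def using \<open>A \<subseteq> M\<close> by auto
  qed
  moreover have "C \<subseteq> A"
    unfolding C_def by blast
  ultimately have "C = A"
    using A unfolding minimal_invariant_admissible_def invariant_admissible_def by blast
  then show ?thesis
    using \<open>x \<in> A\<close> \<open>y \<in> A\<close> unfolding C_def mball_def by blast
qed

lemma minimal_invariant_admissible_singleton:
  assumes "bounded M" "hyperconvex M" "diminishes_radius M T"
    and A: "minimal_invariant_admissible M T A"
  obtains a where "A = {a}"
proof -
  have "A \<noteq> {}" "bounded A"
    using A by (auto simp: minimal_invariant_admissible_def invariant_admissible_def admissible_def)
  have "diameter A \<le> 0"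
  proof (rule ccontr)
    assume "\<not> diameter A \<le> 0"
    then obtain x y where "x \<in> A" "y \<in> A" "diameter A / 2 < dist x y"
      using diameter_lower_bounded[OF \<open>bounded A\<close>, of "diameter A / 2"] by auto
    then show False
      using minimal_invariant_admissible_half_diameter[OF assms] by fastforce
  qed
  obtain a where "a \<in> A"
    using \<open>A \<noteq> {}\<close> by blast
  have "b = a" if "b \<in> A" for b
    using diameter_bounded_bound[OF \<open>bounded A\<close> \<open>a \<in> A\<close> that] \<open>diameter A \<le> 0\<close>
    by (metis dist_le_zero_iff order_trans)
  then show thesis
    using \<open>a \<in> A\<close> that by blast
qed

lemma invariant_admissible_fixed_point:
  assumes "bounded M" "hyperconvex M" "diminishes_radius M T" "invariant_admissible M T B"
  obtains p where "p \<in> B" "T p = p"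
proof -
  obtain A where "A \<subseteq> B" and A: "minimal_invariant_admissible M T A"
    using minimal_invariant_admissible_exists[OF assms(2,4)] .
  moreover obtain a where "A = {a}"
    using minimal_invariant_admissible_singleton[OF assms(1-3) A] .
  ultimately show thesis
    using that by (auto simp: minimal_invariant_admissible_def invariant_admissible_def)
qed

lemma diminishes_radius_dist_fixed_point:
  assumes "diminishes_radius M T" "x \<in> M" "T x = x" "z \<in> M"
  shows "dist (T z) x \<le> dist z x"
proof -
  have "mball M x 0 = {x}"
    using assms(2) by (auto simp: mball_def)
  then have "admissible M {x}"
    using admissible_mball[OF assms(2), of 0] by simp
  moreover have "T ` {x} \<subseteq> {x}"
    using assms(3) by simp
  ultimately have "\<forall>y\<in>M. radius_at (T y) (T ` {x}) \<le> radius_at y {x}"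
    using assms(1) unfolding diminishes_radius_def by blast
  then have "radius_at (T z) (T ` {x}) \<le> radius_at z {x}"
    using assms(4) by blast
  then show ?thesis
    using assms(3) by (simp add: radius_at_def)
qed

lemma hyperconvex_fixed_points:
  assumes "bounded M" "hyperconvex M" "T ` M \<subseteq> M" "diminishes_radius M T"
  shows "hyperconvex {x \<in> M. T x = x}"
  unfolding hyperconvex_def
proof (intro allI impI)
  fix I :: "('a \<times> real) set"
  assume I: "I \<subseteq> {x \<in> M. T x = x} \<times> UNIV"
    and pair: "\<forall>(x, r)\<in>I. \<forall>(y, s)\<in>I. dist x y \<le> r + s"
  define B where "B = \<Inter>(insert M ((\<lambda>(x, r). mball M x r) ` I))"
  have "admissible M B"
    unfolding B_def
    by (rule admissible_Inter) (use I admissible_self[OF assms(1)] in \<open>auto intro: admissible_mball\<close>)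
  moreover have "B \<noteq> {}"
  proof -
    have I_sub: "I \<subseteq> M \<times> UNIV"
      using I by blast
    have I_pair: "dist x y \<le> r + s" if "(x, r) \<in> I" "(y, s) \<in> I" for x r y s
      using pair that by fast
    obtain p where "p \<in> M" "\<And>x r. (x, r) \<in> I \<Longrightarrow> dist x p \<le> r"
      using hyperconvexE[OF assms(2) I_sub] I_pair by blast
    then show ?thesis
      unfolding B_def mball_def by auto
  qed
  moreover have "T ` B \<subseteq> B"
  proof (rule image_subsetI)
    fix z assume "z \<in> B"
    then have "z \<in> M" and z: "\<And>x r. (x, r) \<in> I \<Longrightarrow> dist x z \<le> r"
      unfolding B_def mball_def by auto
    have "dist x (T z) \<le> r" if "(x, r) \<in> I" for x r
      using diminishes_radius_dist_fixed_point[OF assms(4) _ _ \<open>z \<in> M\<close>, of x] z[OF that] that I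
      by (auto simp: dist_commute)
    then show "T z \<in> B"
      using assms(3) \<open>z \<in> M\<close> unfolding B_def mball_def by auto
  qed
  ultimately obtain p where "p \<in> B" "T p = p"
    using invariant_admissible_fixed_point[OF assms(1,2,4)] unfolding invariant_admissible_def by blast
  then show "{x \<in> M. T x = x} \<inter> (\<Inter>(x, r)\<in>I. mball {x \<in> M. T x = x} x r) \<noteq> {}"
    unfolding B_def mball_def by auto
qed

theorem theorem2p1:
  fixes M :: "'a::metric_space set" and T :: "'a \<Rightarrow> 'a"
  assumes "bounded M"
    and "hyperconvex M"
    and "T ` M \<subseteq> M"
    and "diminishes_radius M T"
  shows "(\<exists>x\<in>M. T x = x) \<and> hyperconvex {x \<in> M. T x = x}"
proof
  have "invariant_admissible M T M"
    using admissible_self[OF assms(1)] hyperconvex_nonempty[OF assms(2)] assms(3)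
    by (simp add: invariant_admissible_def)
  then show "\<exists>x\<in>M. T x = x"
    using invariant_admissible_fixed_point[OF assms(1,2,4)] by blast
  show "hyperconvex {x \<in> M. T x = x}"
    using assms by (rule hyperconvex_fixed_points)
qed

end
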